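(* Fix $n\in\{1,\dots,N\}$ and write $U(y,t)=U(v_n,y,t)$. Then for $t\in[0,1)$: $U_t+\beta(U(y+1,t)-2U(y,t)+U(y-1,t))=0$ for $y>\overline m_n$ or $y<\underline m_n$; $U_t+\beta(U(y+1,t)-2U(y,t)+U(y-1,t))=(p(\underline m_n,t)-v_n)\beta$ for $y=\overline m_n$; $U_t+\beta(U(y+1,t)-2U(y,t)+U(y-1,t))=(v_n-p(\overline m_n,t))\beta$ for $y=\underline m_n$; $U(y,t)-U(y+1,t)-(v_n-p(y,t))=0$ for $y\ge\overline m_n$; $U(y,t)-U(y-1,t)+(v_n-p(y,t))=0$ for $y\le\underline m_n$.
   Context: Order size $1$, $N<\infty$, $v_1<\dots<v_N$. $Z$ is the difference of two independent Poisson processes with intensity $\beta>0$; $\mathbb{E}^y$ denotes expectation with $Z_0=y$. Strictly increasing $(a_n)_{n=1}^{N+1}\subset\mathbb{Z}\cup\{\pm\infty\}$, $a_1=-\infty$, $a_{N+1}=\infty$, $\bigcup_n[a_n,a_{n+1})=\mathbb{Z}\cup\{-\infty\}$, $m_n=(a_n+a_{n+1}-1)/2\notin\mathbb{Z}$, $\underline m_n=\lfloor m_n\rfloor$, $\overline m_n=\lceil m_n\rceil$ (with $\underline m_1=\overline m_1=-\infty$, $\underline m_N=\overline m_N=+\infty$). $P(y)=v_n$ for $y\in[a_n,a_{n+1})$; $p(y,t)=\mathbb{E}^y[P(Z_{1-t})]$; $A(y)=P(y+1)$, $B(y)=P(y-1)$. $U(v_n,y,1)=\sum_{j=y}^{a_n-1}(v_n-A(j))\mathbf{1}_{\{y\le\underline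 m_n\}}+\sum_{j=a_{n+1}}^y(B(j)-v_n)\mathbf{1}_{\{y\ge\overline m_n\}}$ (empty sums $0$); for $t<1$, $U(v_n,y,t)=U(v_n,y,1)+\beta\int_t^1(p(y,r)-p(y-1,r))dr$ if $y\ge\overline m_n$, and $U(v_n,y,t)=U(v_n,y,1)+\beta\int_t^1(p(y+1,r)-p(y,r))dr$ if $y\le\underline m_n$. *)

theory Defs
  imports "HOL-Analysis.Analysis" "HOL-Probability.Probability"
begin

definition aE :: "nat \<Rightarrow> (nat \<Rightarrow> int) \<Rightarrow> nat \<Rightarrow> ereal" where
  "aE N a k = (if k \<le> 1 then -\<infinity> else if k \<ge> N + 1 then \<infinity> else ereal (real_of_int (a k)))"

definition Pf :: "nat \<Rightarrow> (nat \<Rightarrow> real) \<Rightarrow> (nat \<Rightarrow> int) \<Rightarrow> int \<Rightarrow> real" where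
  "Pf N v a y = v (THE n. n \<in> {1..N} \<and> aE N a n \<le> ereal (real_of_int y) \<and> ereal (real_of_int y) < aE N a (Suc n))"

text \<open>p(y,t) = E^y[P(Z_(1-t))], Z = N1 - N2 with N1,N2 independent Poisson processes of
  intensity beta, so Z_s - Z_0 = N1_s - N2_s with N1_s, N2_s iid Poisson(beta s); Z_0 = y.\<close>
definition pf :: "real \<Rightarrow> nat \<Rightarrow> (nat \<Rightarrow> real) \<Rightarrow> (nat \<Rightarrow> int) \<Rightarrow> int \<Rightarrow> real \<Rightarrow> real" where
  "pf \<beta> N v a y t = (if 1 - t \<le> 0 then Pf N v a y
     else measure_pmf.expectation
            (pair_pmf (poisson_pmf (\<beta> * (1 - t))) (poisson_pmf (\<beta> * (1 - t))))
            (\<lambda>(j, k). Pf N v a (y + int j - int k)))"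

definition mlo :: "nat \<Rightarrow> (nat \<Rightarrow> int) \<Rightarrow> nat \<Rightarrow> ereal" where
  "mlo N a n = (if n = 1 then -\<infinity> else if n = N then \<infinity>
     else ereal (real_of_int \<lfloor>(real_of_int (a n) + real_of_int (a (Suc n)) - 1) / 2\<rfloor>))"

definition mup :: "nat \<Rightarrow> (nat \<Rightarrow> int) \<Rightarrow> nat \<Rightarrow> ereal" where
  "mup N a n = (if n = 1 then -\<infinity> else if n = N then \<infinity>
     else ereal (real_of_int \<lceil>(real_of_int (a n) + real_of_int (a (Suc n)) - 1) / 2\<rceil>))"

definition U1 :: "nat \<Rightarrow> (nat \<Rightarrow> real) \<Rightarrow> (nat \<Rightarrow> int) \<Rightarrow> nat \<Rightarrow> int \<Rightarrow> real" where
  "U1 N v a n y =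
     (if ereal (real_of_int y) \<le> mlo N a n then
        (\<Sum>j\<in>{j. y \<le> j \<and> ereal (real_of_int j) < aE N a n}. v n - Pf N v a (j + 1)) else 0)
   + (if ereal (real_of_int y) \<ge> mup N a n then
        (\<Sum>j\<in>{j. aE N a (Suc n) \<le> ereal (real_of_int j) \<and> j \<le> y}. Pf N v a (j - 1) - v n) else 0)"

definition Uf :: "real \<Rightarrow> nat \<Rightarrow> (nat \<Rightarrow> real) \<Rightarrow> (nat \<Rightarrow> int) \<Rightarrow> nat \<Rightarrow> int \<Rightarrow> real \<Rightarrow> real" where
  "Uf \<beta> N v a n y t =
     U1 N v a n y
     + (if ereal (real_of_int y) \<ge> mup N a n then
          \<beta> * integral {t..1} (\<lambda>r. pf \<beta> N v a y r - pf \<beta> N v a (y - 1) r)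
        else if ereal (real_of_int y) \<le> mlo N a n then
          \<beta> * integral {t..1} (\<lambda>r. pf \<beta> N v a (y + 1) r - pf \<beta> N v a y r)
        else 0)"

end

theory Submission
  imports Defs
begin

text \<open>
  With \<open>u = \<beta>(1 - t)\<close>, \<open>p(y, t)\<close> is the expectation of \<open>P(y + J - K)\<close> for independent
  \<open>J, K \<sim> Poisson(u)\<close>. Summing the joint law along the antidiagonals \<open>j + k = n\<close> turns it into
  the power series \<open>exp(-2u) \<Sum>\<^sub>n u\<^sup>n/n! \<Sum>\<^sub>j (n choose j) P(y + 2j - n)\<close>, and termwise
  differentiation shows that it solves the discrete heat equation \<open>\<partial>\<^sub>u = \<Delta>\<close>; so \<open>p\<close> satisfies the
  backward Kolmogorov equation \<open>\<partial>\<^sub>t p = -\<beta> \<Delta> p\<close>. Integrating it over \<open>[t, 1]\<close> and adding the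
  telescoping first differences of the terminal value \<open>U(\<cdot>, 1)\<close> gives the first-difference
  identities for \<open>U(\<cdot>, t)\<close>. Differentiating the integral in \<open>t\<close> and combining two first
  differences gives the equation for \<open>U\<close>; the source terms at \<open>\<lfloor>m\<^sub>n\<rfloor>\<close> and \<open>\<lceil>m\<^sub>n\<rceil>\<close> come from the
  two halves of \<open>U\<close> meeting there, where \<open>U(\<lfloor>m\<^sub>n\<rfloor>, t) = U(\<lceil>m\<^sub>n\<rceil>, t)\<close>.
\<close>

section \<open>The discrete heat flow on the integers\<close>

definition walk_sum :: "(int \<Rightarrow> real) \<Rightarrow> nat \<Rightarrow> int \<Rightarrow> real" where
  "walk_sum g n y = (\<Sum>j\<le>n. real (n choose j) * g (y + 2 * int j - int n))"

lemma walk_sum_Suc: "walk_sum g (Suc n) y = walk_sum g n (y + 1) + walk_sum g n (y - 1)"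
proof -
  define f where "f = (\<lambda>j::nat. g (y + 2 * int j - int (Suc n)))"
  have "walk_sum g (Suc n) y = (\<Sum>j\<le>Suc n. real (Suc n choose j) * f j)"
    by (simp add: walk_sum_def f_def)
  also have "\<dots> = (\<Sum>j\<le>n. real (n choose j) * f (Suc j))
      + (f 0 + (\<Sum>j\<le>n. real (n choose Suc j) * f (Suc j)))"
    by (subst sum.atMost_Suc_shift) (simp add: sum.distrib algebra_simps)
  also have "f 0 + (\<Sum>j\<le>n. real (n choose Suc j) * f (Suc j)) = (\<Sum>j\<le>n. real (n choose j) * f j)"
    using sum.atMost_Suc_shift[of "\<lambda>j. real (n choose j) * f j" n] by (simp add: binomial_eq_0)
  also have "(\<Sum>j\<le>n. real (n choose j) * f j) = walk_sum g n (y - 1)"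
    unfolding walk_sum_def f_def by (intro sum.cong refl) (simp add: algebra_simps)
  also have "(\<Sum>j\<le>n. real (n choose j) * f (Suc j)) = walk_sum g n (y + 1)"
    unfolding walk_sum_def f_def by (intro sum.cong refl) (simp add: algebra_simps)
  finally show ?thesis .
qed

lemma abs_walk_sum_le:
  assumes "\<And>x. \<bar>g x\<bar> \<le> M"
  shows "\<bar>walk_sum g n y\<bar> \<le> 2 ^ n * M"
proof -
  have "\<bar>walk_sum g n y\<bar> \<le> (\<Sum>j\<le>n. \<bar>real (n choose j) * g (y + 2 * int j - int n)\<bar>)"
    unfolding walk_sum_def by (rule sum_abs)
  also have "\<dots> \<le> (\<Sum>j\<le>n. real (n choose j) * M)"
    by (intro sum_mono) (simp add: abs_mult assms mult_left_mono)
  also have "\<dots> = 2 ^ n * M"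
    by (simp add: sum_distrib_right[symmetric] choose_row_sum flip: of_nat_sum)
  finally show ?thesis .
qed

definition walk_series :: "(int \<Rightarrow> real) \<Rightarrow> int \<Rightarrow> real \<Rightarrow> real" where
  "walk_series g y u = (\<Sum>n. walk_sum g n y / fact n * u ^ n)"

lemma summable_walk_series:
  assumes "\<And>x. \<bar>g x\<bar> \<le> M"
  shows "summable (\<lambda>n. walk_sum g n y / fact n * u ^ n)"
proof (rule summable_comparison_test)
  show "summable (\<lambda>n. M * (inverse (fact n) * (2 * \<bar>u\<bar>) ^ n))"
    by (intro summable_mult summable_exp)
  have "norm (walk_sum g n y / fact n * u ^ n) \<le> M * (inverse (fact n) * (2 * \<bar>u\<bar>) ^ n)" for n
  proof -
    have "norm (walk_sum g n y / fact n * u ^ n) = \<bar>walk_sum g n y\<bar> * (inverse (fact n) * \<bar>u\<bar> ^ n)"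
      by (simp add: abs_mult power_abs divide_inverse)
    also have "\<dots> \<le> (2 ^ n * M) * (inverse (fact n) * \<bar>u\<bar> ^ n)"
      by (intro mult_right_mono abs_walk_sum_le assms) simp
    finally show ?thesis
      by (simp add: power_mult_distrib mult_ac)
  qed
  then show "\<exists>N. \<forall>n\<ge>N. norm (walk_sum g n y / fact n * u ^ n) \<le> M * (inverse (fact n) * (2 * \<bar>u\<bar>) ^ n)"
    by blast
qed

lemma walk_series_has_derivative:
  assumes "\<And>x. \<bar>g x\<bar> \<le> M"
  shows "(walk_series g y has_real_derivative walk_series g (y + 1) u + walk_series g (y - 1) u) (at u)"
proof -
  have "(walk_series g y has_real_derivative (\<Sum>n. diffs (\<lambda>n. walk_sum g n y / fact n) n * u ^ n)) (at u)"
    unfolding walk_series_def[abs_def]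
    by (rule termdiffs_strong_converges_everywhere) (rule summable_walk_series[OF assms])
  also have "(\<lambda>n. diffs (\<lambda>n. walk_sum g n y / fact n) n * u ^ n)
      = (\<lambda>n. walk_sum g n (y + 1) / fact n * u ^ n + walk_sum g n (y - 1) / fact n * u ^ n)"
    by (rule ext) (simp add: diffs_def walk_sum_Suc field_simps del: of_nat_Suc)
  also have "(\<Sum>n. walk_sum g n (y + 1) / fact n * u ^ n + walk_sum g n (y - 1) / fact n * u ^ n)
      = walk_series g (y + 1) u + walk_series g (y - 1) u"
    unfolding walk_series_def by (intro suminf_add[symmetric] summable_walk_series[OF assms])
  finally show ?thesis .
qed

definition heat_flow :: "(int \<Rightarrow> real) \<Rightarrow> int \<Rightarrow> real \<Rightarrow> real" where
  "heat_flow g y u = exp (-2 * u) * walk_series g y u"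

lemma heat_flow_0 [simp]: "heat_flow g y 0 = g y"
  unfolding heat_flow_def walk_series_def
  using powser_zero[of "\<lambda>n. walk_sum g n y / fact n"] by (simp add: walk_sum_def)

lemma heat_flow_has_derivative:
  assumes "\<And>x. \<bar>g x\<bar> \<le> M"
  shows "(heat_flow g y has_real_derivative heat_flow g (y + 1) u - 2 * heat_flow g y u + heat_flow g (y - 1) u) (at u)"
  unfolding heat_flow_def [abs_def]
  by (rule derivative_eq_intros walk_series_has_derivative[OF assms] refl)+ (simp add: algebra_simps)

lemma poisson_antidiagonal_sum:
  assumes "u > 0"
  shows "(\<Sum>j\<le>n. pmf (poisson_pmf u) j * pmf (poisson_pmf u) (n - j) * g (y + int j - int (n - j)))
     = exp (-2 * u) * (walk_sum g n y / fact n * u ^ n)"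
proof -
  have "pmf (poisson_pmf u) j * pmf (poisson_pmf u) (n - j) * g (y + int j - int (n - j))
      = exp (-2 * u) * (real (n choose j) * g (y + 2 * int j - int n) / fact n * u ^ n)"
    if "j \<le> n" for j
  proof -
    have binom: "real (n choose j) / fact n = 1 / (fact j * fact (n - j))"
      using that by (simp add: binomial_fact field_simps)
    have pow: "u ^ j * u ^ (n - j) = u ^ n"
      using that by (simp flip: power_add)
    have ex: "exp (-u) * exp (-u) = exp (-2 * u)"
      by (simp flip: exp_add)
    have idx: "y + int j - int (n - j) = y + 2 * int j - int n"
      using that by simp
    have "pmf (poisson_pmf u) j * pmf (poisson_pmf u) (n - j) * g (y + int j - int (n - j))
        = exp (-u) * exp (-u) * (u ^ j * u ^ (n - j)) / (fact j * fact (n - j)) * g (y + int j - int (n - j))"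
      using assms by simp
    also have "\<dots> = exp (-2 * u) * (real (n choose j) / fact n * u ^ n * g (y + 2 * int j - int n))"
      unfolding ex pow idx binom by simp
    finally show ?thesis
      by simp
  qed
  then show ?thesis
    by (simp add: walk_sum_def sum_distrib_left sum_distrib_right sum_divide_distrib)
qed

lemma bij_betw_antidiagonal: "bij_betw (\<lambda>(n, j). (j, n - j)) (SIGMA n:UNIV. {..n::nat}) UNIV"
  by (rule bij_betw_byWitness[where f' = "\<lambda>(j, k). (j + k, j)"]) auto

(* Infinite_Set_Sum and Infinite_Sum both declare abs_summable_on syntax; use the former. *)
no_notation Infinite_Sum.abs_summable_on (infixr \<open>abs'_summable'_on\<close> 46)

lemma expectation_poisson_pair_eq_heat_flow:
  assumes bd: "\<And>x. \<bar>g x\<bar> \<le> M" and u: "u > 0"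
  shows "measure_pmf.expectation (pair_pmf (poisson_pmf u) (poisson_pmf u))
           (\<lambda>(j, k). g (y + int j - int k)) = heat_flow g y u"
proof -
  define p where "p = pair_pmf (poisson_pmf u) (poisson_pmf u)"
  define T where "T = (\<lambda>(j, k). pmf p (j, k) * g (y + int j - int k))"
  define \<phi> :: "nat \<times> nat \<Rightarrow> nat \<times> nat" where "\<phi> = (\<lambda>(n, j). (j, n - j))"
  have "T abs_summable_on UNIV"
  proof (rule abs_summable_on_comparison_test')
    show "(\<lambda>x. M * pmf p x) abs_summable_on UNIV"
      by (intro abs_summable_on_cmult_right pmf_abs_summable)
    show "norm (T x) \<le> M * pmf p x" for x
      by (cases x) (simp add: T_def abs_mult mult.commute[of M] mult_left_mono bd)
  qed
  then have summable: "(T \<circ> \<phi>) abs_summable_on (SIGMA n:UNIV. {..n})"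
    using abs_summable_on_reindex_bij_betw[OF bij_betw_antidiagonal, of T] by (simp add: \<phi>_def comp_def)
  have inner: "infsetsum (\<lambda>j. T (\<phi> (n, j))) {..n} = exp (-2 * u) * (walk_sum g n y / fact n * u ^ n)" for n
    using poisson_antidiagonal_sum[OF u, of n g y] by (simp add: T_def \<phi>_def p_def pmf_pair)
  have "measure_pmf.expectation p (\<lambda>(j, k). g (y + int j - int k)) = infsetsum T UNIV"
    by (simp add: pmf_expectation_eq_infsetsum T_def case_prod_unfold)
  also have "\<dots> = infsetsum (T \<circ> \<phi>) (SIGMA n:UNIV. {..n})"
    using infsetsum_reindex_bij_betw[OF bij_betw_antidiagonal, of T] by (simp add: \<phi>_def)
  also have "\<dots> = infsetsum (\<lambda>n. infsetsum (\<lambda>j. T (\<phi> (n, j))) {..n}) UNIV"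
    using infsetsum_Sigma[OF _ _ summable] by simp
  also have "\<dots> = (\<Sum>n. exp (-2 * u) * (walk_sum g n y / fact n * u ^ n))"
  proof -
    have "(\<lambda>n. infsetsum (\<lambda>j. T (\<phi> (n, j))) {..n}) abs_summable_on UNIV"
      by (rule abs_summable_on_Sigma_project1'[where f = "\<lambda>n j. T (\<phi> (n, j))"])
        (use summable in \<open>auto simp: comp_def\<close>)
    then show ?thesis
      unfolding inner by (rule infsetsum_nat')
  qed
  also have "\<dots> = heat_flow g y u"
    unfolding heat_flow_def walk_series_def by (rule suminf_mult[OF summable_walk_series[OF bd]])
  finally show ?thesis
    by (simp add: p_def)
qed

section \<open>The backward equation for the expected price\<close>

lemma pf_eq_heat_flow:
  assumes bd: "\<And>x. \<bar>Pf N v a x\<bar> \<le> M" and \<beta>: "\<beta> > 0" and t: "t \<le> 1"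
  shows "pf \<beta> N v a y t = heat_flow (Pf N v a) y (\<beta> * (1 - t))"
proof (cases "t = 1")
  case True
  then show ?thesis by (simp add: pf_def)
next
  case False
  with \<beta> t have "\<beta> * (1 - t) > 0" by simp
  with False t show ?thesis
    using expectation_poisson_pair_eq_heat_flow[OF bd] by (simp add: pf_def)
qed

lemma pf_has_derivative:
  assumes bd: "\<And>x. \<bar>Pf N v a x\<bar> \<le> M" and \<beta>: "\<beta> > 0" and t: "t \<le> 1"
  shows "((\<lambda>r. pf \<beta> N v a y r) has_real_derivative
           \<beta> * (2 * pf \<beta> N v a y t - pf \<beta> N v a (y + 1) t - pf \<beta> N v a (y - 1) t)) (at t within {..1})"
proof -
  let ?h = "\<lambda>z r. heat_flow (Pf N v a) z (\<beta> * (1 - r))"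
  have "(?h y has_real_derivative (?h (y + 1) t - 2 * ?h y t + ?h (y - 1) t) * (- \<beta>)) (at t)"
    by (rule DERIV_chain2[OF heat_flow_has_derivative[OF bd]]) (auto intro!: derivative_eq_intros)
  then have "(?h y has_real_derivative
      \<beta> * (2 * pf \<beta> N v a y t - pf \<beta> N v a (y + 1) t - pf \<beta> N v a (y - 1) t)) (at t within {..1})"
    by (auto simp: pf_eq_heat_flow[OF bd \<beta> t] algebra_simps intro: has_field_derivative_at_within)
  then show ?thesis
    by (rule has_field_derivative_transform_within[OF _ zero_less_one])
      (use t in \<open>auto simp: pf_eq_heat_flow[OF bd \<beta>]\<close>)
qed

lemma continuous_on_pf:
  assumes bd: "\<And>x. \<bar>Pf N v a x\<bar> \<le> M" and \<beta>: "\<beta> > 0"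
  shows "continuous_on {..1} (\<lambda>r. pf \<beta> N v a y r)"
  by (rule DERIV_continuous_on) (use pf_has_derivative[OF bd \<beta>] in auto)

lemma integral_pf_backward_equation:
  assumes bd: "\<And>x. \<bar>Pf N v a x\<bar> \<le> M" and \<beta>: "\<beta> > 0" and t: "t \<le> 1"
  shows "\<beta> * integral {t..1} (\<lambda>r. pf \<beta> N v a y r - pf \<beta> N v a (y - 1) r)
       - \<beta> * integral {t..1} (\<lambda>r. pf \<beta> N v a (y + 1) r - pf \<beta> N v a y r)
       = Pf N v a y - pf \<beta> N v a y t"
proof -
  let ?p = "\<lambda>z r. pf \<beta> N v a z r"
  have integrable: "(\<lambda>r. ?p z r - ?p w r) integrable_on {t..1}" for z w
    by (intro integrable_continuous_interval continuous_on_diff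
        continuous_on_subset[OF continuous_on_pf[OF bd \<beta>]]) auto
  have "((\<lambda>r. \<beta> * (?p y r - ?p (y - 1) r) - \<beta> * (?p (y + 1) r - ?p y r)) has_integral (?p y 1 - ?p y t)) {t..1}"
  proof (rule fundamental_theorem_of_calculus[OF t])
    fix r assume "r \<in> {t..1}"
    with pf_has_derivative[OF bd \<beta>, of r y]
    have "(?p y has_real_derivative \<beta> * (?p y r - ?p (y - 1) r) - \<beta> * (?p (y + 1) r - ?p y r)) (at r within {t..1})"
      by (auto simp: algebra_simps intro: DERIV_subset)
    then show "(?p y has_vector_derivative \<beta> * (?p y r - ?p (y - 1) r) - \<beta> * (?p (y + 1) r - ?p y r)) (at r within {t..1})"
      by (simp add: has_real_derivative_iff_has_vector_derivative)
  qed
  then have "integral {t..1} (\<lambda>r. \<beta> * (?p y r - ?p (y - 1) r) - \<beta> * (?p (y + 1) r - ?p y r))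
      = Pf N v a y - ?p y t"
    by (simp add: integral_unique pf_def)
  moreover have "integral {t..1} (\<lambda>r. \<beta> * (?p y r - ?p (y - 1) r) - \<beta> * (?p (y + 1) r - ?p y r))
      = \<beta> * integral {t..1} (\<lambda>r. ?p y r - ?p (y - 1) r) - \<beta> * integral {t..1} (\<lambda>r. ?p (y + 1) r - ?p y r)"
    by (subst integral_diff) (use \<beta> integrable in simp_all)
  ultimately show ?thesis
    by simp
qed

lemma has_real_derivative_integral_pf_diff:
  assumes bd: "\<And>x. \<bar>Pf N v a x\<bar> \<le> M" and \<beta>: "\<beta> > 0" and t: "t \<in> {0..1}"
  shows "((\<lambda>s. \<beta> * integral {s..1} (\<lambda>r. pf \<beta> N v a z r - pf \<beta> N v a w r)) has_real_derivative
           \<beta> * (pf \<beta> N v a w t - pf \<beta> N v a z t)) (at t within {0..1})"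
proof -
  have "continuous_on {0..1} (\<lambda>r. pf \<beta> N v a z r - pf \<beta> N v a w r)"
    by (intro continuous_on_diff continuous_on_subset[OF continuous_on_pf[OF bd \<beta>]]) auto
  from DERIV_cmult[OF integral_has_real_derivative'[OF this t], of \<beta>] show ?thesis
    by simp
qed

section \<open>Price bands and the value function\<close>

context
  fixes N n :: nat and v :: "nat \<Rightarrow> real" and a :: "nat \<Rightarrow> int"
  assumes ha: "strict_mono_on {2..N} a"
    and hm: "\<forall>k\<in>{2..N-1}. (real_of_int (a k) + real_of_int (a (Suc k)) - 1) / 2 \<notin> \<int>"
    and hn: "n \<in> {1..N}"
begin

lemma aE_strict_mono: "1 \<le> k \<Longrightarrow> k < l \<Longrightarrow> l \<le> N + 1 \<Longrightarrow> aE N a k < aE N a l"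
  using ha unfolding aE_def strict_mono_on_def by auto

lemma Pf_eq:
  assumes "k \<in> {1..N}" "aE N a k \<le> ereal (of_int y)" "ereal (of_int y) < aE N a (Suc k)"
  shows "Pf N v a y = v k"
proof -
  have "l = k" if "l \<in> {1..N}" "aE N a l \<le> ereal (of_int y)" "ereal (of_int y) < aE N a (Suc l)" for l
  proof (rule ccontr)
    assume "l \<noteq> k"
    then have "aE N a (Suc (min k l)) \<le> aE N a (max k l)"
      using aE_strict_mono[of "Suc (min k l)" "max k l"] assms(1) that(1)
      by (cases "Suc (min k l) = max k l") (auto simp: min_def max_def)
    then show False
      using assms that by (auto simp: min_def max_def split: if_splits)
  qed
  with assms have "(THE l. l \<in> {1..N} \<and> aE N a l \<le> ereal (of_int y) \<and> ereal (of_int y) < aE N a (Suc l)) = k"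
    by blast
  then show ?thesis
    by (simp add: Pf_def)
qed

lemma Pf_bounded: obtains M where "\<And>y. \<bar>Pf N v a y\<bar> \<le> M"
proof
  fix y :: int
  define K where "K = {k\<in>{1..N}. aE N a k \<le> ereal (of_int y)}"
  define k where "k = Max K"
  have "1 \<in> K" "finite K"
    using hn by (auto simp: K_def aE_def)
  then have k: "k \<in> K" "\<And>l. l \<in> K \<Longrightarrow> l \<le> k"
    unfolding k_def by (auto intro: Max_in)
  have "ereal (of_int y) < aE N a (Suc k)"
  proof (cases "Suc k \<le> N")
    case True
    with k show ?thesis by (fastforce simp: K_def)
  next
    case False
    with k show ?thesis by (simp add: K_def aE_def)
  qed
  with k have "Pf N v a y = v k"
    by (intro Pf_eq) (auto simp: K_def)
  moreover have "\<bar>v k\<bar> \<le> (\<Sum>k\<in>{1..N}. \<bar>v k\<bar>)"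
    using k by (intro member_le_sum) (auto simp: K_def)
  ultimately show "\<bar>Pf N v a y\<bar> \<le> (\<Sum>k\<in>{1..N}. \<bar>v k\<bar>)"
    by simp
qed

lemma band_cases:
  obtains (first) "mlo N a n = -\<infinity>" "mup N a n = -\<infinity>" "aE N a n = -\<infinity>"
  | (last) "mlo N a n = \<infinity>" "mup N a n = \<infinity>" "aE N a (Suc n) = \<infinity>"
  | (middle) lo where "mlo N a n = ereal (of_int lo)" "mup N a n = ereal (of_int (lo + 1))"
      "aE N a n = ereal (of_int (a n))" "aE N a (Suc n) = ereal (of_int (a (Suc n)))"
      "a n \<le> lo" "lo + 2 \<le> a (Suc n)"
proof -
  consider "n = 1" | "n = N" "n \<noteq> 1" | "1 < n" "n < N"
    using hn by fastforce
  then show ?thesis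
  proof cases
    case 3
    define m where "m = (real_of_int (a n) + real_of_int (a (Suc n)) - 1) / 2"
    have "a n < a (Suc n)"
      using ha 3 unfolding strict_mono_on_def by auto
    then have "a n \<le> \<lfloor>m\<rfloor>" "m \<le> of_int (a (Suc n) - 1)"
      by (simp_all add: m_def le_floor_iff)
    then have "a n \<le> \<lfloor>m\<rfloor>" "\<lceil>m\<rceil> \<le> a (Suc n) - 1"
      by (simp_all only: ceiling_le_iff)
    moreover have "m \<notin> \<int>"
      using hm 3 by (auto simp: m_def)
    then have "m \<noteq> of_int \<lfloor>m\<rfloor>"
      by (metis Ints_of_int)
    then have "\<lceil>m\<rceil> = \<lfloor>m\<rfloor> + 1"
      by (simp add: ceiling_altdef)
    ultimately show ?thesis
      using 3 by (intro middle[of "\<lfloor>m\<rfloor>"]) (simp_all add: mlo_def mup_def aE_def m_def)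
  qed (use hn first last in \<open>auto simp: mlo_def mup_def aE_def\<close>)
qed

lemma mup_le_iff_not_le_mlo: "mup N a n \<le> ereal (of_int y) \<longleftrightarrow> \<not> ereal (of_int y) \<le> mlo N a n"
  by (cases rule: band_cases) (auto simp del: of_int_add of_int_diff)

lemma mup_less_imp_le_pred: "mup N a n < ereal (of_int y) \<Longrightarrow> mup N a n \<le> ereal (of_int (y - 1))"
  by (cases rule: band_cases) (auto simp del: of_int_add of_int_diff)

lemma less_mlo_imp_succ_le: "ereal (of_int y) < mlo N a n \<Longrightarrow> ereal (of_int (y + 1)) \<le> mlo N a n"
  by (cases rule: band_cases) (auto simp del: of_int_add of_int_diff)

lemma eq_mup_iff_pred_eq_mlo: "ereal (of_int y) = mup N a n \<longleftrightarrow> ereal (of_int (y - 1)) = mlo N a n"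
  by (cases rule: band_cases) (auto simp del: of_int_add of_int_diff)

lemma aE_le_mlo: "aE N a n \<le> mlo N a n"
  by (cases rule: band_cases) (auto simp del: of_int_add of_int_diff)

lemma le_mup_imp_less_aE_Suc: "ereal (of_int y) \<le> mup N a n \<Longrightarrow> ereal (of_int y) < aE N a (Suc n)"
  by (cases rule: band_cases) (auto simp del: of_int_add of_int_diff)

lemma U1_diff_up:
  assumes y: "mup N a n \<le> ereal (of_int y)"
  shows "U1 N v a n y - U1 N v a n (y + 1) = v n - Pf N v a y"
proof -
  define S where "S z = {j. aE N a (Suc n) \<le> ereal (of_int j) \<and> j \<le> z}" for z
  have y1: "mup N a n \<le> ereal (of_int (y + 1))"
    using y by (rule order_trans) simp
  have U1: "U1 N v a n z = (\<Sum>j\<in>S z. Pf N v a (j - 1) - v n)" if "mup N a n \<le> ereal (of_int z)" for z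
    using that by (simp add: U1_def S_def mup_le_iff_not_le_mlo)
  show ?thesis
  proof (cases "aE N a (Suc n) \<le> ereal (of_int (y + 1))")
    case True
    then obtain A where A: "aE N a (Suc n) = ereal (of_int A)"
      using hn by (auto simp: aE_def split: if_splits)
    then have "S z = {A..z}" for z
      by (auto simp: S_def)
    with True A have "S (y + 1) = insert (y + 1) (S y)" "y + 1 \<notin> S y" "finite (S y)"
      by auto
    with y y1 show ?thesis
      by (simp add: U1)
  next
    case False
    then have below: "ereal (of_int j) < aE N a (Suc n)" if "j \<le> y + 1" for j
      using that by (metis not_le order.strict_trans1 ereal_less_eq(3) of_int_le_iff)
    then have "S y = {}" "S (y + 1) = {}"
      by (auto simp: S_def not_le[symmetric])
    moreover have "aE N a n \<le> ereal (of_int y)"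
      using aE_le_mlo y by (auto simp: mup_le_iff_not_le_mlo)
    ultimately show ?thesis
      using y y1 hn below[of y] by (simp add: U1 Pf_eq)
  qed
qed

lemma U1_diff_lo:
  assumes y: "ereal (of_int y) \<le> mlo N a n"
  shows "U1 N v a n y - U1 N v a n (y - 1) = Pf N v a y - v n"
proof -
  define S where "S z = {j. z \<le> j \<and> ereal (of_int j) < aE N a n}" for z
  have y1: "ereal (of_int (y - 1)) \<le> mlo N a n"
    using y by (rule order_trans[rotated]) simp
  have U1: "U1 N v a n z = (\<Sum>j\<in>S z. v n - Pf N v a (j + 1))" if "ereal (of_int z) \<le> mlo N a n" for z
    using that by (simp add: U1_def S_def mup_le_iff_not_le_mlo)
  show ?thesis
  proof (cases "ereal (of_int (y - 1)) < aE N a n")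
    case True
    then obtain A where A: "aE N a n = ereal (of_int A)"
      using hn by (auto simp: aE_def split: if_splits)
    then have "S z = {z..<A}" for z
      by (auto simp: S_def)
    with True A have "S (y - 1) = insert (y - 1) (S y)" "y - 1 \<notin> S y" "finite (S y)"
      by auto
    with y y1 show ?thesis
      by (simp add: U1)
  next
    case False
    then have above: "aE N a n \<le> ereal (of_int j)" if "y - 1 \<le> j" for j
      using that by (metis not_less order_trans ereal_less_eq(3) of_int_le_iff)
    then have "S y = {}" "S (y - 1) = {}"
      by (auto simp: S_def not_less[symmetric])
    moreover have "ereal (of_int y) < mup N a n"
      using y by (simp add: not_le[symmetric] mup_le_iff_not_le_mlo)
    ultimately show ?thesis
      using y y1 hn above[of y] by (simp add: U1 Pf_eq le_mup_imp_less_aE_Suc)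
  qed
qed

lemma U1_at_mup:
  assumes y: "ereal (of_int y) = mup N a n"
  shows "U1 N v a n y = 0" "U1 N v a n (y - 1) = 0"
proof -
  have up: "mup N a n \<le> ereal (of_int y)"
    using y by simp
  then have not_lo: "\<not> ereal (of_int y) \<le> mlo N a n"
    by (simp add: mup_le_iff_not_le_mlo)
  have "ereal (of_int j) < aE N a (Suc n)" if "j \<le> y" for j
    using that y le_mup_imp_less_aE_Suc by (metis ereal_less_eq(3) of_int_le_iff)
  then show "U1 N v a n y = 0"
    using up not_lo by (auto simp: U1_def not_le[symmetric] intro: sum.neutral)
  have pred: "ereal (of_int (y - 1)) = mlo N a n"
    using y by (simp add: eq_mup_iff_pred_eq_mlo del: of_int_diff)
  then have lo: "ereal (of_int (y - 1)) \<le> mlo N a n"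
    by simp
  then have not_up: "\<not> mup N a n \<le> ereal (of_int (y - 1))"
    by (simp add: mup_le_iff_not_le_mlo del: of_int_diff)
  have "aE N a n \<le> ereal (of_int j)" if "y - 1 \<le> j" for j
    using that aE_le_mlo pred by (metis order_trans ereal_less_eq(3) of_int_le_iff)
  then show "U1 N v a n (y - 1) = 0"
    using lo not_up by (auto simp: U1_def not_less[symmetric] intro: sum.neutral simp del: of_int_diff)
qed

lemma Uf_diff_up:
  assumes \<beta>: "\<beta> > 0" and t: "t \<le> 1" and y: "mup N a n \<le> ereal (of_int y)"
  shows "Uf \<beta> N v a n y t - Uf \<beta> N v a n (y + 1) t = v n - pf \<beta> N v a y t"
proof -
  obtain M where bd: "\<And>x. \<bar>Pf N v a x\<bar> \<le> M"
    using Pf_bounded by blast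
  have "mup N a n \<le> ereal (of_int (y + 1))"
    using y by (rule order_trans) simp
  with y have "Uf \<beta> N v a n y t - Uf \<beta> N v a n (y + 1) t
      = U1 N v a n y - U1 N v a n (y + 1)
        + (\<beta> * integral {t..1} (\<lambda>r. pf \<beta> N v a y r - pf \<beta> N v a (y - 1) r)
           - \<beta> * integral {t..1} (\<lambda>r. pf \<beta> N v a (y + 1) r - pf \<beta> N v a y r))"
    by (simp add: Uf_def)
  also have "\<dots> = v n - pf \<beta> N v a y t"
    using U1_diff_up[OF y] integral_pf_backward_equation[OF bd \<beta> t] by simp
  finally show ?thesis .
qed

lemma Uf_diff_lo:
  assumes \<beta>: "\<beta> > 0" and t: "t \<le> 1" and y: "ereal (of_int y) \<le> mlo N a n"
  shows "Uf \<beta> N v a n y t - Uf \<beta> N v a n (y - 1) t = pf \<beta> N v a y t - v n"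
proof -
  obtain M where bd: "\<And>x. \<bar>Pf N v a x\<bar> \<le> M"
    using Pf_bounded by blast
  have y1: "ereal (of_int (y - 1)) \<le> mlo N a n"
    using y by (rule order_trans[rotated]) simp
  have "\<not> mup N a n \<le> ereal (of_int y)" "\<not> mup N a n \<le> ereal (of_int (y - 1))"
    using y y1 by (simp_all add: mup_le_iff_not_le_mlo del: of_int_diff)
  with y y1 have "Uf \<beta> N v a n y t - Uf \<beta> N v a n (y - 1) t
      = U1 N v a n y - U1 N v a n (y - 1)
        - (\<beta> * integral {t..1} (\<lambda>r. pf \<beta> N v a y r - pf \<beta> N v a (y - 1) r)
           - \<beta> * integral {t..1} (\<lambda>r. pf \<beta> N v a (y + 1) r - pf \<beta> N v a y r))"
    by (simp add: Uf_def del: of_int_diff)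
  also have "\<dots> = pf \<beta> N v a y t - v n"
    using U1_diff_lo[OF y] integral_pf_backward_equation[OF bd \<beta> t] by simp
  finally show ?thesis .
qed

lemma Uf_eq_at_mup:
  assumes y: "ereal (of_int y) = mup N a n"
  shows "Uf \<beta> N v a n (y - 1) t = Uf \<beta> N v a n y t"
proof -
  have lo: "ereal (of_int (y - 1)) \<le> mlo N a n"
    using y by (simp add: eq_mup_iff_pred_eq_mlo del: of_int_diff)
  then have "\<not> mup N a n \<le> ereal (of_int (y - 1))"
    by (simp add: mup_le_iff_not_le_mlo del: of_int_diff)
  with lo y show ?thesis
    by (simp add: Uf_def U1_at_mup[OF y] del: of_int_diff)
qed

lemma Uf_heat_equation_up:
  assumes \<beta>: "\<beta> > 0" and t: "t \<le> 1" and y: "mup N a n \<le> ereal (of_int y)"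
  shows "\<beta> * (pf \<beta> N v a (y - 1) t - pf \<beta> N v a y t)
           + \<beta> * (Uf \<beta> N v a n (y + 1) t - 2 * Uf \<beta> N v a n y t + Uf \<beta> N v a n (y - 1) t)
         = (if ereal (of_int y) = mup N a n then (pf \<beta> N v a (y - 1) t - v n) * \<beta> else 0)"
proof (cases "ereal (of_int y) = mup N a n")
  case True
  then have laplacian: "Uf \<beta> N v a n (y + 1) t - 2 * Uf \<beta> N v a n y t + Uf \<beta> N v a n (y - 1) t
      = pf \<beta> N v a y t - v n"
    using Uf_diff_up[OF \<beta> t y] Uf_eq_at_mup[OF True, of \<beta> t] by linarith
  show ?thesis
    using True unfolding laplacian by (simp add: algebra_simps)
next
  case False
  with y have "mup N a n \<le> ereal (of_int (y - 1))"
    by (intro mup_less_imp_le_pred) simp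
  from Uf_diff_up[OF \<beta> t this] have "Uf \<beta> N v a n (y - 1) t - Uf \<beta> N v a n y t = v n - pf \<beta> N v a (y - 1) t"
    by simp
  with Uf_diff_up[OF \<beta> t y]
  have laplacian: "Uf \<beta> N v a n (y + 1) t - 2 * Uf \<beta> N v a n y t + Uf \<beta> N v a n (y - 1) t
      = pf \<beta> N v a y t - pf \<beta> N v a (y - 1) t"
    by linarith
  show ?thesis
    using False unfolding laplacian by (simp add: algebra_simps)
qed

lemma Uf_heat_equation_lo:
  assumes \<beta>: "\<beta> > 0" and t: "t \<le> 1" and y: "ereal (of_int y) \<le> mlo N a n"
  shows "\<beta> * (pf \<beta> N v a y t - pf \<beta> N v a (y + 1) t)
           + \<beta> * (Uf \<beta> N v a n (y + 1) t - 2 * Uf \<beta> N v a n y t + Uf \<beta> N v a n (y - 1) t)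
         = (if ereal (of_int y) = mlo N a n then (v n - pf \<beta> N v a (y + 1) t) * \<beta> else 0)"
proof (cases "ereal (of_int y) = mlo N a n")
  case True
  then have "ereal (of_int (y + 1)) = mup N a n"
    by (simp add: eq_mup_iff_pred_eq_mlo del: of_int_add)
  from Uf_eq_at_mup[OF this] have "Uf \<beta> N v a n (y + 1) t = Uf \<beta> N v a n y t"
    by simp
  with Uf_diff_lo[OF \<beta> t y]
  have laplacian: "Uf \<beta> N v a n (y + 1) t - 2 * Uf \<beta> N v a n y t + Uf \<beta> N v a n (y - 1) t
      = v n - pf \<beta> N v a y t"
    by linarith
  show ?thesis
    using True unfolding laplacian by (simp add: algebra_simps)
next
  case False
  with y have "ereal (of_int (y + 1)) \<le> mlo N a n"
    by (intro less_mlo_imp_succ_le) simp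
  from Uf_diff_lo[OF \<beta> t this] have "Uf \<beta> N v a n (y + 1) t - Uf \<beta> N v a n y t = pf \<beta> N v a (y + 1) t - v n"
    by simp
  with Uf_diff_lo[OF \<beta> t y]
  have laplacian: "Uf \<beta> N v a n (y + 1) t - 2 * Uf \<beta> N v a n y t + Uf \<beta> N v a n (y - 1) t
      = pf \<beta> N v a (y + 1) t - pf \<beta> N v a y t"
    by linarith
  show ?thesis
    using False unfolding laplacian by (simp add: algebra_simps)
qed

lemma Uf_has_derivative_up:
  assumes \<beta>: "\<beta> > 0" and t: "t \<in> {0..1}" and y: "mup N a n \<le> ereal (of_int y)"
  shows "((\<lambda>s. Uf \<beta> N v a n y s) has_real_derivative \<beta> * (pf \<beta> N v a (y - 1) t - pf \<beta> N v a y t))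
           (at t within {0..1})"
proof -
  obtain M where bd: "\<And>x. \<bar>Pf N v a x\<bar> \<le> M"
    using Pf_bounded by blast
  have "(\<lambda>s. Uf \<beta> N v a n y s)
      = (\<lambda>s. U1 N v a n y + \<beta> * integral {s..1} (\<lambda>r. pf \<beta> N v a y r - pf \<beta> N v a (y - 1) r))"
    using y by (simp add: Uf_def)
  then show ?thesis
    using DERIV_add[OF DERIV_const has_real_derivative_integral_pf_diff[OF bd \<beta> t]] by simp
qed

lemma Uf_has_derivative_lo:
  assumes \<beta>: "\<beta> > 0" and t: "t \<in> {0..1}" and y: "ereal (of_int y) \<le> mlo N a n"
  shows "((\<lambda>s. Uf \<beta> N v a n y s) has_real_derivative \<beta> * (pf \<beta> N v a y t - pf \<beta> N v a (y + 1) t))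
           (at t within {0..1})"
proof -
  obtain M where bd: "\<And>x. \<bar>Pf N v a x\<bar> \<le> M"
    using Pf_bounded by blast
  have "(\<lambda>s. Uf \<beta> N v a n y s)
      = (\<lambda>s. U1 N v a n y + \<beta> * integral {s..1} (\<lambda>r. pf \<beta> N v a (y + 1) r - pf \<beta> N v a y r))"
    using y by (simp add: Uf_def mup_le_iff_not_le_mlo)
  then show ?thesis
    using DERIV_add[OF DERIV_const has_real_derivative_integral_pf_diff[OF bd \<beta> t]] by simp
qed

end

theorem lemma4p3:
  fixes \<beta> :: real and N n :: nat and v :: "nat \<Rightarrow> real" and a :: "nat \<Rightarrow> int"
  assumes hN: "1 \<le> N"
    and hbeta: "\<beta> > 0"
    and hv: "strict_mono_on {1..N} v"
    and ha: "strict_mono_on {2..N} a"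
    and hm: "\<forall>k\<in>{2..N-1}. (real_of_int (a k) + real_of_int (a (Suc k)) - 1) / 2 \<notin> \<int>"
    and hn: "n \<in> {1..N}"
  shows "\<forall>t\<in>{0..<1}. \<forall>y::int.
      (\<exists>D. ((\<lambda>s. Uf \<beta> N v a n y s) has_real_derivative D) (at t within {0..1})
         \<and> ((mup N a n < ereal (real_of_int y) \<or> ereal (real_of_int y) < mlo N a n) \<longrightarrow>
              D + \<beta> * (Uf \<beta> N v a n (y + 1) t - 2 * Uf \<beta> N v a n y t + Uf \<beta> N v a n (y - 1) t) = 0)
         \<and> (ereal (real_of_int y) = mup N a n \<longrightarrow>
              D + \<beta> * (Uf \<beta> N v a n (y + 1) t - 2 * Uf \<beta> N v a n y t + Uf \<beta> N v a n (y - 1) t)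
                = (pf \<beta> N v a (y - 1) t - v n) * \<beta>)
         \<and> (ereal (real_of_int y) = mlo N a n \<longrightarrow>
              D + \<beta> * (Uf \<beta> N v a n (y + 1) t - 2 * Uf \<beta> N v a n y t + Uf \<beta> N v a n (y - 1) t)
                = (v n - pf \<beta> N v a (y + 1) t) * \<beta>))
      \<and> (ereal (real_of_int y) \<ge> mup N a n \<longrightarrow>
           Uf \<beta> N v a n y t - Uf \<beta> N v a n (y + 1) t - (v n - pf \<beta> N v a y t) = 0)
      \<and> (ereal (real_of_int y) \<le> mlo N a n \<longrightarrow>
           Uf \<beta> N v a n y t - Uf \<beta> N v a n (y - 1) t + (v n - pf \<beta> N v a y t) = 0)"
proof (intro ballI allI conjI impI, goal_cases)
  case (1 t y)
  then have t: "t \<in> {0..1}" "t \<le> 1"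
    by auto
  consider (up) "mup N a n \<le> ereal (of_int y)" | (lo) "ereal (of_int y) \<le> mlo N a n"
    using mup_le_iff_not_le_mlo[OF ha hm hn] by blast
  then show ?case
  proof cases
    case up
    then have "\<not> ereal (of_int y) \<le> mlo N a n"
      by (simp add: mup_le_iff_not_le_mlo[OF ha hm hn])
    with Uf_has_derivative_up[OF ha hm hn hbeta t(1) up] Uf_heat_equation_up[OF ha hm hn hbeta t(2) up]
    show ?thesis
      by (intro exI[of _ "\<beta> * (pf \<beta> N v a (y - 1) t - pf \<beta> N v a y t)"]) auto
  next
    case lo
    then have "\<not> mup N a n \<le> ereal (of_int y)"
      by (simp add: mup_le_iff_not_le_mlo[OF ha hm hn])
    with Uf_has_derivative_lo[OF ha hm hn hbeta t(1) lo] Uf_heat_equation_lo[OF ha hm hn hbeta t(2) lo]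
    show ?thesis
      by (intro exI[of _ "\<beta> * (pf \<beta> N v a y t - pf \<beta> N v a (y + 1) t)"]) auto
  qed
next
  case (2 t y)
  then show ?case
    using Uf_diff_up[OF ha hm hn hbeta] by simp
next
  case (3 t y)
  then show ?case
    using Uf_diff_lo[OF ha hm hn hbeta] by simp
qed

end
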